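(* Let $\beta\in(0,\infty)$, $\gamma>0$, and for each $N\ge1$ let $K=K_N$ be a positive integer with $K_N/N\to\beta$. Let $\boldsymbol{S}\in\mathbb{R}^{N\times K}$ be a random time-hopping matrix with $N_{\mathsf s}=1$: its columns are independent, $\boldsymbol{s}_k=\epsilon_k\boldsymbol{e}_{\pi_k}$ with $\pi_k$ uniform on $\{1,\dots,N\}$ and $\epsilon_k$ uniform on $\{-1,+1\}$, all independent. Let \[ C^{\mathsf{opt}}_N(\gamma):=\frac1N\log_2\det\big(\boldsymbol{I}+\gamma\,\boldsymbol{S}\boldsymbol{S}^{\mathsf T}\big). \] Then, as $N\to\infty$, \[ C^{\mathsf{opt}}_N(\gamma)\ \xrightarrow{p}\ \sum_{k\ge0}\frac{\beta^k e^{-\beta}}{k!}\log_2(1+k\gamma). \]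
   Context: $\boldsymbol{e}_i$ denotes the $i$th standard basis vector of $\mathbb{R}^N$; $\xrightarrow{p}$ denotes convergence in probability. $C^{\mathsf{opt}}_N(\gamma)$ is the spectral efficiency (bits/s/Hz) of the channel $\boldsymbol{y}=\boldsymbol{S}\boldsymbol{b}+\boldsymbol{n}$ with optimum decoding at signal-to-noise ratio $\gamma$. *)

theory Defs
  imports "HOL-Probability.Product_PMF" "Jordan_Normal_Form.Determinant"
begin

text \<open>Random time-hopping matrix with N_s = 1.  A sample is a function assigning to
  each column index k < K a pair (pi_k, eps_k) with pi_k uniform on {0..<N}
  (0-based rows) and eps_k uniform on {-1,+1}, all independent.\<close>

definition th_sample_pmf :: "nat \<Rightarrow> nat \<Rightarrow> (nat \<Rightarrow> nat \<times> real) pmf" where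
  "th_sample_pmf N K =
     Pi_pmf {..<K} (0, 1) (\<lambda>_. pair_pmf (pmf_of_set {..<N}) (pmf_of_set {-1, 1}))"

definition th_matrix :: "nat \<Rightarrow> nat \<Rightarrow> (nat \<Rightarrow> nat \<times> real) \<Rightarrow> real mat" where
  "th_matrix N K \<omega> = mat N K (\<lambda>(i, k). if i = fst (\<omega> k) then snd (\<omega> k) else 0)"

definition C_opt :: "nat \<Rightarrow> nat \<Rightarrow> real \<Rightarrow> (nat \<Rightarrow> nat \<times> real) \<Rightarrow> real" where
  "C_opt N K \<gamma> \<omega> =
     (let S = th_matrix N K \<omega> in
      log 2 (det (1\<^sub>m N + \<gamma> \<cdot>\<^sub>m (S * transpose_mat S))) / real N)"

end

theory Submission
  imports Defs
begin

text \<open>Every column of \<open>S\<close> has a single nonzero entry \<open>\<plusminus>1\<close>, so \<open>S S\<^sup>T\<close> is diagonal and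
  its \<open>i\<close>-th entry is the number of columns hopping to row \<open>i\<close>.  Hence \<open>C\<^sup>o\<^sup>p\<^sup>t\<^sub>N\<close> is the
  average over the rows of \<open>log\<^sub>2 (1 + \<gamma> m\<^sub>i)\<close>, where each load \<open>m\<^sub>i\<close> is Binomial\<open>(K, 1/N)\<close>.
  Its mean therefore converges to the Poisson(\<open>\<beta>\<close>) average of \<open>log\<^sub>2 (1 + \<gamma> k)\<close> (Tannery's
  theorem controls the tails).  Moving one of the \<open>K\<close> independent columns changes the average
  by at most \<open>2 log\<^sub>2 (1 + \<gamma>) / N\<close>, so by the Efron--Stein inequality the variance is
  \<open>O(K/N\<^sup>2) = O(1/N)\<close>, and Chebyshev's inequality gives convergence in probability.\<close>

section \<open>Variance of functions of independent coordinates\<close>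

lemma expectation_finite_pmf:
  fixes H :: "'a \<Rightarrow> real"
  assumes "finite (set_pmf M)"
  shows "measure_pmf.expectation M H = (\<Sum>s\<in>set_pmf M. pmf M s * H s)"
  using assms by (subst integral_measure_pmf_real[where A="set_pmf M"]) (auto simp: mult.commute)

lemma expectation_pair_pmf_finite:
  fixes H :: "'a \<times> 'b \<Rightarrow> real"
  assumes "finite (set_pmf P)" "finite (set_pmf Q)"
  shows "measure_pmf.expectation (pair_pmf P Q) H =
     (\<Sum>y\<in>set_pmf P. pmf P y * (\<Sum>f\<in>set_pmf Q. pmf Q f * H (y, f)))"
proof -
  have "measure_pmf.expectation (pair_pmf P Q) H =
      (\<Sum>s\<in>set_pmf P \<times> set_pmf Q. pmf (pair_pmf P Q) s * H s)"
    using assms by (subst expectation_finite_pmf) auto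
  also have "\<dots> = (\<Sum>y\<in>set_pmf P. \<Sum>f\<in>set_pmf Q. pmf P y * (pmf Q f * H (y, f)))"
    unfolding sum.cartesian_product by (intro sum.cong) (auto simp: pmf_pair)
  finally show ?thesis by (simp add: sum_distrib_left)
qed

lemma abs_expectation_le_finite_pmf:
  fixes H :: "'a \<Rightarrow> real"
  assumes "finite (set_pmf M)" "\<And>s. s \<in> set_pmf M \<Longrightarrow> \<bar>H s\<bar> \<le> c"
  shows "\<bar>measure_pmf.expectation M H\<bar> \<le> c"
  using integral_abs_bound measure_pmf.integral_le_const[OF integrable_measure_pmf_finite AE_pmfI]
    assms by (metis (no_types, lifting) order.trans)

lemma pair_pmf_variance_decomposition:
  fixes G :: "'a \<times> 'b \<Rightarrow> real"
  assumes P: "finite (set_pmf P)" and Q: "finite (set_pmf Q)"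
  defines "h \<equiv> \<lambda>y. measure_pmf.expectation Q (\<lambda>f. G (y, f))"
  shows "measure_pmf.variance (pair_pmf P Q) G =
     measure_pmf.expectation P (\<lambda>y. measure_pmf.variance Q (\<lambda>f. G (y, f)))
     + measure_pmf.variance P h"
proof -
  define \<mu> where "\<mu> = measure_pmf.expectation (pair_pmf P Q) G"
  have \<mu>: "\<mu> = measure_pmf.expectation P h"
    unfolding \<mu>_def h_def by (simp add: expectation_pair_pmf_finite[OF P Q] expectation_finite_pmf[OF P]
        expectation_finite_pmf[OF Q])
  have inner: "(\<Sum>f\<in>set_pmf Q. pmf Q f * (G (y, f) - \<mu>)^2) =
      (\<Sum>f\<in>set_pmf Q. pmf Q f * (G (y, f) - h y)^2) + (h y - \<mu>)^2" for y
  proof -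
    have hy: "h y = (\<Sum>f\<in>set_pmf Q. pmf Q f * G (y, f))"
      unfolding h_def using Q by (simp add: expectation_finite_pmf)
    have s1: "(\<Sum>f\<in>set_pmf Q. pmf Q f) = 1" using Q by (rule sum_pmf_eq_1) auto
    have "(\<Sum>f\<in>set_pmf Q. pmf Q f * (G (y, f) - \<mu>)^2) =
       (\<Sum>f\<in>set_pmf Q. pmf Q f * (G (y, f) - h y)^2 + 2 * (h y - \<mu>) * (pmf Q f * G (y, f))
          - 2 * (h y - \<mu>) * h y * pmf Q f + (h y - \<mu>)^2 * pmf Q f)"
      by (intro sum.cong refl) (simp add: power2_eq_square algebra_simps)
    also have "\<dots> = (\<Sum>f\<in>set_pmf Q. pmf Q f * (G (y, f) - h y)^2) + 2 * (h y - \<mu>) * h y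
          - 2 * (h y - \<mu>) * h y * 1 + (h y - \<mu>)^2 * 1"
      unfolding sum.distrib sum_subtractf s1[symmetric] sum_distrib_left[symmetric] hy[symmetric]
      by simp
    finally show ?thesis by simp
  qed
  have "measure_pmf.variance (pair_pmf P Q) G =
     (\<Sum>y\<in>set_pmf P. pmf P y * (\<Sum>f\<in>set_pmf Q. pmf Q f * (G (y, f) - \<mu>)^2))"
    unfolding \<mu>_def[symmetric] using P Q by (simp add: expectation_pair_pmf_finite)
  also have "\<dots> = (\<Sum>y\<in>set_pmf P. pmf P y * (\<Sum>f\<in>set_pmf Q. pmf Q f * (G (y, f) - h y)^2))
     + (\<Sum>y\<in>set_pmf P. pmf P y * (h y - \<mu>)^2)"
    unfolding inner by (simp add: distrib_left sum.distrib)
  finally show ?thesis using P Q by (simp add: expectation_finite_pmf \<mu> h_def)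
qed

lemma finite_set_Pi_pmf:
  assumes "finite A" "\<And>x. finite (set_pmf (p x))"
  shows "finite (set_pmf (Pi_pmf A d p))"
  using assms by (subst set_Pi_pmf) auto

text \<open>Efron--Stein for bounded differences: peeling off one coordinate with the variance
  decomposition costs at most \<open>c\<^sup>2\<close>.\<close>

lemma Pi_pmf_variance_le_bounded_differences:
  fixes F :: "('a \<Rightarrow> 'b) \<Rightarrow> real"
  assumes "finite A" "\<And>x. finite (set_pmf (p x))"
    and "\<And>w k y. k \<in> A \<Longrightarrow> \<bar>F (w(k := y)) - F w\<bar> \<le> c"
  shows "measure_pmf.variance (Pi_pmf A d p) F \<le> real (card A) * c\<^sup>2"
  using assms(1,3)
proof (induction A arbitrary: F rule: finite_induct)
  case empty
  then show ?case by simp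
next
  case (insert x A F)
  define P where "P = p x"
  define Q where "Q = Pi_pmf A d p"
  have fP: "finite (set_pmf P)" unfolding P_def using assms(2) .
  have fQ: "finite (set_pmf Q)" unfolding Q_def using finite_set_Pi_pmf[OF insert(1) assms(2)] .
  define G where "G = (\<lambda>z::'b \<times> ('a \<Rightarrow> 'b). F ((snd z)(x := fst z)))"
  define h where "h = (\<lambda>y. measure_pmf.expectation Q (\<lambda>f. G (y, f)))"
  have split: "Pi_pmf (insert x A) d p = map_pmf (\<lambda>z. (snd z)(x := fst z)) (pair_pmf P Q)"
    unfolding P_def Q_def by (subst Pi_pmf_insert[OF insert(1,2)]) (simp add: case_prod_beta')
  have fibre: "measure_pmf.variance Q (\<lambda>f. G (y, f)) \<le> real (card A) * c\<^sup>2" for y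
    unfolding Q_def G_def fst_conv snd_conv
  proof (rule insert.IH)
    fix w k z assume k: "k \<in> A"
    with insert(2) have "(w(k := z))(x := y) = (w(x := y))(k := z)" by (auto intro: fun_upd_twist)
    then show "\<bar>F ((w(k := z))(x := y)) - F (w(x := y))\<bar> \<le> c" using k by (simp add: insert(4))
  qed
  have h_close: "\<bar>h y - h y'\<bar> \<le> c" for y y'
  proof -
    have "h y - h y' = measure_pmf.expectation Q (\<lambda>f. G (y, f) - G (y', f))"
      unfolding h_def using fQ by (simp add: expectation_finite_pmf sum_subtractf right_diff_distrib)
    also have "\<bar>\<dots>\<bar> \<le> c"
    proof (rule abs_expectation_le_finite_pmf[OF fQ])
      fix f
      show "\<bar>G (y, f) - G (y', f)\<bar> \<le> c"
        using insert(4)[of x "f(x := y')" y] unfolding G_def by (simp del: fun_upd_apply)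
    qed
    finally show ?thesis .
  qed
  have mean: "(h y - measure_pmf.expectation P h)\<^sup>2 \<le> c\<^sup>2" for y
  proof -
    have "h y - measure_pmf.expectation P h = measure_pmf.expectation P (\<lambda>y'. h y - h y')"
      using fP by (simp add: expectation_finite_pmf sum_subtractf right_diff_distrib
          sum_distrib_right[symmetric] sum_pmf_eq_1)
    also have "\<bar>\<dots>\<bar> \<le> c" by (rule abs_expectation_le_finite_pmf[OF fP h_close])
    finally have "\<bar>h y - measure_pmf.expectation P h\<bar> \<le> \<bar>c\<bar>" by simp
    then show ?thesis by (simp add: abs_le_square_iff)
  qed
  have "measure_pmf.variance (Pi_pmf (insert x A) d p) F = measure_pmf.variance (pair_pmf P Q) G"
    unfolding split G_def by simp
  also have "\<dots> = measure_pmf.expectation P (\<lambda>y. measure_pmf.variance Q (\<lambda>f. G (y, f)))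
      + measure_pmf.variance P h"
    unfolding h_def by (rule pair_pmf_variance_decomposition[OF fP fQ])
  also have "\<dots> \<le> real (card A) * c\<^sup>2 + c\<^sup>2"
    by (intro add_mono measure_pmf.integral_le_const integrable_measure_pmf_finite fP AE_pmfI
        fibre mean)
  finally show ?case using insert(1,2) by (simp add: algebra_simps)
qed

section \<open>Poisson limit of binomial laws\<close>

lemma inverse_real_of_nat_in_unit: "1 / real N \<in> {0..1}"
  by (cases N) auto

lemma real_choose_le_power_div_fact: "real (n choose k) \<le> real n ^ k / fact k"
proof (cases "k \<le> n")
  case True
  have "(\<Prod>i=0..<k. real n - real i) \<le> (\<Prod>i=0..<k. real n)"
    using True by (intro prod_mono) auto
  then show ?thesis by (simp add: binomial_gbinomial gbinomial_prod_rev divide_right_mono)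
next
  case False then show ?thesis by (simp add: binomial_eq_0)
qed

lemma one_minus_inverse_power_tendsto_exp:
  fixes K :: "nat \<Rightarrow> nat" and \<beta> :: real
  assumes "(\<lambda>N. real (K N) / real N) \<longlonglongrightarrow> \<beta>"
  shows "(\<lambda>N. (1 - 1 / real N) ^ K N) \<longlonglongrightarrow> exp (- \<beta>)"
proof -
  have "(\<lambda>N. ln ((1 + (-1) / real N) ^ N)) \<longlonglongrightarrow> ln (exp (-1))"
    by (intro tendsto_ln tendsto_exp_limit_sequentially) auto
  then have "(\<lambda>N. exp (real (K N) / real N * ln ((1 - 1 / real N) ^ N))) \<longlonglongrightarrow> exp (\<beta> * (-1))"
    by (intro tendsto_intros assms) simp
  moreover have "\<forall>\<^sub>F N in sequentially.
      exp (real (K N) / real N * ln ((1 - 1 / real N) ^ N)) = (1 - 1 / real N) ^ K N"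
    using eventually_ge_at_top[of 2]
  proof eventually_elim
    case (elim N)
    then have pos: "1 - 1 / real N > 0" by (simp add: field_simps)
    have "real (K N) / real N * ln ((1 - 1 / real N) ^ N) = ln ((1 - 1 / real N) ^ K N)"
      using elim pos by (simp add: ln_realpow)
    then show ?case using pos by simp
  qed
  ultimately show ?thesis by (simp add: tendsto_cong)
qed

lemma eventually_ge_of_ratio_tendsto:
  fixes K :: "nat \<Rightarrow> nat"
  assumes "(\<lambda>N. real (K N) / real N) \<longlonglongrightarrow> \<beta>" "\<beta> > 0"
  shows "\<forall>\<^sub>F N in sequentially. K N \<ge> k"
proof -
  have "filterlim (\<lambda>N. real (K N) / real N * real N) at_top sequentially"
    by (rule filterlim_tendsto_pos_mult_at_top[OF assms filterlim_real_sequentially])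
  then have "\<forall>\<^sub>F N in sequentially. real (K N) / real N * real N \<ge> real k"
    by (simp add: filterlim_at_top)
  then show ?thesis
    using eventually_ge_at_top[of 1] by eventually_elim auto
qed

lemma pmf_binomial_tendsto_poisson:
  fixes K :: "nat \<Rightarrow> nat" and \<beta> :: real
  assumes lim: "(\<lambda>N. real (K N) / real N) \<longlonglongrightarrow> \<beta>" and "\<beta> > 0"
  shows "(\<lambda>N. pmf (binomial_pmf (K N) (1 / real N)) k) \<longlonglongrightarrow> \<beta> ^ k / fact k * exp (- \<beta>)"
proof -
  have "(\<lambda>N. \<Prod>i=0..<k. real (K N) / real N - real i * (1 / real N)) \<longlonglongrightarrow> (\<Prod>i=0..<k. \<beta> - real i * 0)"
    by (intro tendsto_intros lim lim_inverse_n')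
  then have falling: "(\<lambda>N. \<Prod>i=0..<k. (real (K N) - real i) / real N) \<longlonglongrightarrow> \<beta> ^ k"
    by (simp add: diff_divide_distrib)
  have "(\<lambda>N. (1 - 1 / real N) ^ k) \<longlonglongrightarrow> (1 - 0) ^ k"
    by (intro tendsto_intros lim_inverse_n')
  then have "(\<lambda>N. (\<Prod>i=0..<k. (real (K N) - real i) / real N) / fact k *
      ((1 - 1 / real N) ^ K N / (1 - 1 / real N) ^ k)) \<longlonglongrightarrow> \<beta> ^ k / fact k * (exp (- \<beta>) / 1)"
    by (intro tendsto_intros falling one_minus_inverse_power_tendsto_exp lim) auto
  moreover have "\<forall>\<^sub>F N in sequentially.
      (\<Prod>i=0..<k. (real (K N) - real i) / real N) / fact k *
        ((1 - 1 / real N) ^ K N / (1 - 1 / real N) ^ k) =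
      pmf (binomial_pmf (K N) (1 / real N)) k"
    using eventually_ge_of_ratio_tendsto[OF assms, of k] eventually_ge_at_top[of 2]
  proof eventually_elim
    case (elim N)
    then have "1 - 1 / real N \<noteq> 0" by (simp add: field_simps)
    have "(\<Prod>i=0..<k. (real (K N) - real i) / real N) / fact k =
        real (K N choose k) * (1 / real N) ^ k"
      by (simp add: binomial_gbinomial gbinomial_prod_rev prod_dividef power_one_over)
    moreover have "(1 - 1 / real N) ^ K N / (1 - 1 / real N) ^ k = (1 - 1 / real N) ^ (K N - k)"
      using elim \<open>1 - 1 / real N \<noteq> 0\<close> by (simp add: power_diff)
    ultimately show ?case using inverse_real_of_nat_in_unit[of N] by (simp add: mult.assoc)
  qed
  ultimately show ?thesis by (simp add: tendsto_cong)
qed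

lemma pmf_binomial_inverse_le:
  assumes "real K / real N \<le> R"
  shows "pmf (binomial_pmf K (1 / real N)) k \<le> R ^ k / fact k"
proof -
  have "pmf (binomial_pmf K (1 / real N)) k \<le> real (K choose k) * (1 / real N) ^ k"
    using inverse_real_of_nat_in_unit[of N] by (auto intro!: mult_left_le power_le_one)
  also have "\<dots> \<le> real K ^ k / fact k * (1 / real N) ^ k"
    by (intro mult_right_mono real_choose_le_power_div_fact) auto
  also have "\<dots> = (real K / real N) ^ k / fact k" by (simp add: power_divide)
  also have "\<dots> \<le> R ^ k / fact k"
    using assms by (intro divide_right_mono power_mono) auto
  finally show ?thesis .
qed

text \<open>Tannery's theorem, with the dominating sequence \<open>B (C R)\<^sup>k / k!\<close> for \<open>K/N \<le> R\<close>.\<close>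

lemma expectation_binomial_tendsto_poisson:
  fixes K :: "nat \<Rightarrow> nat" and \<beta> B C :: real and g :: "nat \<Rightarrow> real"
  assumes lim: "(\<lambda>N. real (K N) / real N) \<longlonglongrightarrow> \<beta>" and "\<beta> > 0"
    and g: "\<And>k. \<bar>g k\<bar> \<le> B * C ^ k"
  shows "(\<lambda>N. measure_pmf.expectation (binomial_pmf (K N) (1 / real N)) g)
          \<longlonglongrightarrow> (\<Sum>k. \<beta> ^ k / fact k * exp (- \<beta>) * g k)"
proof -
  define R where "R = \<beta> + 1"
  define a where "a = (\<lambda>k N. pmf (binomial_pmf (K N) (1 / real N)) k * g k)"
  have "(\<lambda>N. \<Sum>k. a k N) \<longlonglongrightarrow> (\<Sum>k. \<beta> ^ k / fact k * exp (- \<beta>) * g k)"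
  proof (rule tannerys_theorem[THEN conjunct2, THEN conjunct2])
    show "(\<lambda>N. a k N) \<longlonglongrightarrow> \<beta> ^ k / fact k * exp (- \<beta>) * g k" for k
      unfolding a_def by (intro tendsto_intros pmf_binomial_tendsto_poisson assms)
    have "\<forall>\<^sub>F N in sequentially. real (K N) / real N < R"
      using lim unfolding R_def by (rule order_tendstoD) simp
    moreover have "norm (a k N) \<le> B * (inverse (fact k) * (C * R) ^ k)"
      if "real (K N) / real N < R" for k N
    proof -
      have "norm (a k N) \<le> R ^ k / fact k * (B * C ^ k)"
        unfolding a_def real_norm_def abs_mult abs_of_nonneg[OF pmf_nonneg]
        using that \<open>\<beta> > 0\<close>
        by (intro mult_mono pmf_binomial_inverse_le g) (auto simp: R_def)
      then show ?thesis by (simp add: power_mult_distrib field_simps)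
    qed
    ultimately show "\<forall>\<^sub>F (k, N) in at_top \<times>\<^sub>F sequentially.
        norm (a k N) \<le> B * (inverse (fact k) * (C * R) ^ k)"
      unfolding eventually_prod_filter
      by (intro exI[of _ "\<lambda>_. True"] exI[of _ "\<lambda>N. real (K N) / real N < R"]) auto
    show "summable (\<lambda>k. B * (inverse (fact k) * (C * R) ^ k))"
      by (intro summable_mult summable_exp)
  qed simp
  moreover have "(\<Sum>k. a k N) = measure_pmf.expectation (binomial_pmf (K N) (1 / real N)) g" for N
    using inverse_real_of_nat_in_unit[of N]
    by (subst suminf_finite[where N="{..K N}"]) (auto simp: a_def expectation_binomial_pmf' binomial_eq_0)
  ultimately show ?thesis by simp
qed

section \<open>Row loads of the time-hopping matrix\<close>

definition row_load :: "nat \<Rightarrow> (nat \<Rightarrow> nat \<times> real) \<Rightarrow> nat \<Rightarrow> nat" where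
  "row_load K \<omega> i = card {k\<in>{..<K}. fst (\<omega> k) = i}"

definition log_gain :: "real \<Rightarrow> nat \<Rightarrow> real" where
  "log_gain \<gamma> m = log 2 (1 + real m * \<gamma>)"

definition load_capacity :: "nat \<Rightarrow> nat \<Rightarrow> real \<Rightarrow> (nat \<Rightarrow> nat \<times> real) \<Rightarrow> real" where
  "load_capacity N K \<gamma> \<omega> = (\<Sum>i<N. log_gain \<gamma> (row_load K \<omega> i)) / real N"

lemma set_pmf_th_sample:
  assumes "N \<ge> 1"
  shows "set_pmf (th_sample_pmf N K) = PiE_dflt {..<K} (0, 1) (\<lambda>_. {..<N} \<times> {-1, 1})"
proof -
  have "{..<N} \<noteq> {}" using assms by (simp add: lessThan_empty_iff)
  then show ?thesis unfolding th_sample_pmf_def by (subst set_Pi_pmf) (auto simp: set_pmf_of_set)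
qed

lemma finite_set_pmf_th_sample:
  assumes "N \<ge> 1"
  shows "finite (set_pmf (th_sample_pmf N K))"
  using assms unfolding set_pmf_th_sample[OF assms] by (intro finite_PiE_dflt) auto

lemma th_matrix_gram:
  assumes N: "N \<ge> 1" and \<omega>: "\<omega> \<in> set_pmf (th_sample_pmf N K)" and "i < N" "j < N"
  shows "(th_matrix N K \<omega> * transpose_mat (th_matrix N K \<omega>)) $$ (i, j) =
    (if i = j then real (row_load K \<omega> i) else 0)"
proof -
  have sign: "snd (\<omega> k) * snd (\<omega> k) = 1" if "k < K" for k
    using \<omega> that unfolding set_pmf_th_sample[OF N] PiE_dflt_def by auto
  have "(th_matrix N K \<omega> * transpose_mat (th_matrix N K \<omega>)) $$ (i, j) =
      (\<Sum>k\<in>{0..<K}. (if i = fst (\<omega> k) then snd (\<omega> k) else 0) *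
        (if j = fst (\<omega> k) then snd (\<omega> k) else 0))"
    using assms by (simp add: th_matrix_def scalar_prod_def)
  also have "\<dots> = (\<Sum>k\<in>{0..<K}. if i = j \<and> fst (\<omega> k) = i then 1 else 0)"
    by (intro sum.cong refl) (auto simp: sign)
  also have "\<dots> = (if i = j then real (row_load K \<omega> i) else 0)"
    by (auto simp: row_load_def sum.inter_filter[symmetric] atLeast0LessThan)
  finally show ?thesis .
qed

lemma C_opt_eq_load_capacity:
  assumes N: "N \<ge> 1" and \<omega>: "\<omega> \<in> set_pmf (th_sample_pmf N K)" and "\<gamma> > 0"
  shows "C_opt N K \<gamma> \<omega> = load_capacity N K \<gamma> \<omega>"
proof -
  define A where "A = 1\<^sub>m N + \<gamma> \<cdot>\<^sub>m (th_matrix N K \<omega> * transpose_mat (th_matrix N K \<omega>))"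
  have S: "th_matrix N K \<omega> \<in> carrier_mat N K" by (simp add: th_matrix_def)
  then have A: "A \<in> carrier_mat N N" unfolding A_def by auto
  have A_entry: "A $$ (i, j) = (if i = j then 1 + \<gamma> * real (row_load K \<omega> i) else 0)"
    if "i < N" "j < N" for i j
    unfolding A_def using that S th_matrix_gram[OF N \<omega> that] by auto
  have "det A = (\<Prod>i\<in>{0..<N}. 1 + \<gamma> * real (row_load K \<omega> i))"
    using A A_entry
    by (subst det_upper_triangular[OF _ A])
       (auto simp: upper_triangular_def diag_mat_def prod.distinct_set_conv_list[symmetric])
  moreover have "1 + \<gamma> * real (row_load K \<omega> i) \<noteq> 0" for i
    using add_pos_nonneg[of 1 "\<gamma> * real (row_load K \<omega> i)"] \<open>\<gamma> > 0\<close> by simp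
  ultimately have "log 2 (det A) = (\<Sum>i<N. log_gain \<gamma> (row_load K \<omega> i))"
    unfolding log_def by (simp add: ln_prod sum_divide_distrib atLeast0LessThan log_gain_def
        log_def mult.commute)
  then show ?thesis
    unfolding C_opt_def load_capacity_def Let_def A_def[symmetric] by simp
qed

lemma log_gain_nonneg: "\<gamma> > 0 \<Longrightarrow> log_gain \<gamma> m \<ge> 0"
  unfolding log_gain_def by (simp add: add_pos_nonneg)

lemma log_gain_mono: "\<gamma> > 0 \<Longrightarrow> m \<le> n \<Longrightarrow> log_gain \<gamma> m \<le> log_gain \<gamma> n"
  unfolding log_gain_def by (subst log_le_cancel_iff) (auto simp: add_pos_nonneg mult_right_mono)

lemma log_gain_Suc_le:
  assumes "\<gamma> > 0"
  shows "log_gain \<gamma> (Suc m) \<le> log_gain \<gamma> m + log 2 (1 + \<gamma>)"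
proof -
  have pos: "1 + real m * \<gamma> > 0" using assms by (simp add: add_pos_nonneg)
  have "1 + real (Suc m) * \<gamma> \<le> (1 + \<gamma>) * (1 + real m * \<gamma>)"
    using assms by (simp add: algebra_simps)
  then have "log 2 (1 + real (Suc m) * \<gamma>) \<le> log 2 ((1 + \<gamma>) * (1 + real m * \<gamma>))"
    using assms pos by (subst log_le_cancel_iff) (auto simp: add_pos_nonneg)
  also have "\<dots> = log 2 (1 + \<gamma>) + log 2 (1 + real m * \<gamma>)"
    using assms pos by (subst log_mult) auto
  finally show ?thesis unfolding log_gain_def by simp
qed

lemma log_gain_le_linear:
  assumes "\<gamma> > 0"
  shows "log_gain \<gamma> m \<le> real m * log 2 (1 + \<gamma>)"
proof (induction m)
  case 0
  then show ?case by (simp add: log_gain_def)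
next
  case (Suc m)
  then show ?case using log_gain_Suc_le[OF assms, of m] by (simp add: algebra_simps)
qed

lemma abs_log_gain_le_power:
  assumes "\<gamma> > 0"
  shows "\<bar>log_gain \<gamma> m\<bar> \<le> log 2 (1 + \<gamma>) * 2 ^ m"
proof -
  have "real m \<le> 2 ^ m"
    using less_exp[of m] by (simp add: of_nat_less_numeral_power_cancel_iff less_imp_le)
  then have "real m * log 2 (1 + \<gamma>) \<le> 2 ^ m * log 2 (1 + \<gamma>)"
    using assms by (intro mult_right_mono) auto
  then show ?thesis
    using log_gain_le_linear[OF assms, of m] log_gain_nonneg[OF assms, of m] by (simp add: mult.commute)
qed

lemma abs_log_gain_diff_le:
  assumes "\<gamma> > 0" "m \<le> n + 1" "n \<le> m + 1"
  shows "\<bar>log_gain \<gamma> m - log_gain \<gamma> n\<bar> \<le> log 2 (1 + \<gamma>)"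
  using assms log_gain_Suc_le[OF assms(1), of m] log_gain_Suc_le[OF assms(1), of n]
    log_gain_mono[OF assms(1), of m n] log_gain_mono[OF assms(1), of n m]
  by (cases "m = n") (auto simp: le_Suc_eq)

lemma row_load_fun_upd_le:
  "row_load K (w(k := z)) i \<le> row_load K w i + 1"
  "row_load K w i \<le> row_load K (w(k := z)) i + 1"
proof -
  have card_le: "card A \<le> card B + 1" if "finite B" "A - {k} \<subseteq> B" for A B :: "nat set"
  proof -
    have "card A \<le> card (insert k B)" using that by (intro card_mono) auto
    also have "\<dots> \<le> card B + 1" using that by (simp add: card_insert_if)
    finally show ?thesis .
  qed
  show "row_load K (w(k := z)) i \<le> row_load K w i + 1" "row_load K w i \<le> row_load K (w(k := z)) i + 1"
    unfolding row_load_def by (rule card_le; auto)+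
qed

lemma row_load_fun_upd_other:
  "i \<noteq> fst (w k) \<Longrightarrow> i \<noteq> fst z \<Longrightarrow> row_load K (w(k := z)) i = row_load K w i"
  unfolding row_load_def by (intro arg_cong[where f=card]) auto

text \<open>Moving one column changes at most two row loads, each by at most one.\<close>

lemma abs_load_capacity_fun_upd_le:
  assumes "\<gamma> > 0"
  shows "\<bar>load_capacity N K \<gamma> (w(k := z)) - load_capacity N K \<gamma> w\<bar> \<le> 2 * log 2 (1 + \<gamma>) / real N"
proof -
  define L where "L = log 2 (1 + \<gamma>)"
  define \<delta> where "\<delta> = (\<lambda>i. log_gain \<gamma> (row_load K (w(k := z)) i) - log_gain \<gamma> (row_load K w i))"
  have L: "L \<ge> 0" unfolding L_def using assms by simp
  have \<delta>: "\<bar>\<delta> i\<bar> \<le> L * ((if i = fst (w k) then 1 else 0) + (if i = fst z then 1 else 0))" for i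
  proof (cases "i = fst (w k) \<or> i = fst z")
    case True
    have "\<bar>\<delta> i\<bar> \<le> L"
      unfolding \<delta>_def L_def by (intro abs_log_gain_diff_le assms row_load_fun_upd_le)
    also have "\<dots> \<le> L * ((if i = fst (w k) then 1 else 0) + (if i = fst z then 1 else 0))"
      using True L by auto
    finally show ?thesis .
  next
    case False
    then show ?thesis by (simp add: \<delta>_def row_load_fun_upd_other)
  qed
  have "\<bar>\<Sum>i<N. \<delta> i\<bar> \<le> (\<Sum>i<N. L * ((if i = fst (w k) then 1 else 0) + (if i = fst z then 1 else 0)))"
    by (intro order.trans[OF sum_abs] sum_mono \<delta>)
  also have "\<dots> = L * ((if fst (w k) < N then 1 else 0) + (if fst z < N then 1 else 0))"
    by (simp add: sum_distrib_left[symmetric] sum.distrib)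
  also have "\<dots> \<le> 2 * L" using L by auto
  finally have "\<bar>\<Sum>i<N. \<delta> i\<bar> / real N \<le> 2 * L / real N" by (intro divide_right_mono) auto
  then show ?thesis
    unfolding load_capacity_def \<delta>_def L_def by (simp add: diff_divide_distrib[symmetric] sum_subtractf)
qed

lemma map_pmf_of_set_lessThan_eq_bernoulli:
  assumes "i < N"
  shows "map_pmf (\<lambda>a. a = i) (pmf_of_set {..<N}) = bernoulli_pmf (1 / real N)"
proof (rule pmf_eqI)
  have ne: "{..<N} \<noteq> {}" using assms by auto
  fix b :: bool
  show "pmf (map_pmf (\<lambda>a. a = i) (pmf_of_set {..<N})) b = pmf (bernoulli_pmf (1 / real N)) b"
  proof (cases b)
    case True
    have "pmf (map_pmf (\<lambda>a. a = i) (pmf_of_set {..<N})) b = measure (pmf_of_set {..<N}) {i}"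
      using True by (simp add: pmf_map vimage_def)
    also have "\<dots> = 1 / real N" using ne assms by (simp add: measure_pmf_of_set)
    finally show ?thesis using True assms by simp
  next
    case False
    have "pmf (map_pmf (\<lambda>a. a = i) (pmf_of_set {..<N})) b = measure (pmf_of_set {..<N}) (- {i})"
      using False by (simp add: pmf_map vimage_def Compl_eq)
    also have "\<dots> = real (card ({..<N} - {i})) / real N"
      using ne by (simp add: measure_pmf_of_set Diff_eq)
    also have "\<dots> = 1 - 1 / real N" using assms by (simp add: of_nat_diff field_simps)
    finally show ?thesis using False assms by simp
  qed
qed

lemma row_load_binomial:
  assumes "i < N"
  shows "map_pmf (\<lambda>\<omega>. row_load K \<omega> i) (th_sample_pmf N K) = binomial_pmf K (1 / real N)"
proof -
  define P where "P = pair_pmf (pmf_of_set {..<N}) (pmf_of_set {-1, 1::real})"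
  define hit where "hit = (\<lambda>z::nat \<times> real. fst z = i)"
  have bernoulli: "map_pmf hit P = bernoulli_pmf (1 / real N)"
    unfolding P_def hit_def
    by (subst pmf.map_comp[symmetric, of "\<lambda>a. a = i" fst, unfolded o_def])
       (simp add: map_fst_pair_pmf map_pmf_of_set_lessThan_eq_bernoulli[OF assms])
  have "binomial_pmf K (1 / real N) =
      map_pmf (\<lambda>h. card {x\<in>{..<K}. h x}) (Pi_pmf {..<K} (hit (0, 1)) (\<lambda>_. map_pmf hit P))"
    unfolding bernoulli using inverse_real_of_nat_in_unit[of N] by (intro binomial_pmf_altdef') auto
  also have "Pi_pmf {..<K} (hit (0, 1)) (\<lambda>_. map_pmf hit P) =
      map_pmf (\<lambda>h. hit \<circ> h) (Pi_pmf {..<K} (0, 1) (\<lambda>_. P))"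
    by (rule Pi_pmf_map) auto
  finally show ?thesis
    unfolding th_sample_pmf_def P_def pmf.map_comp by (simp add: o_def row_load_def hit_def)
qed

lemma expectation_load_capacity:
  assumes "N \<ge> 1"
  shows "measure_pmf.expectation (th_sample_pmf N K) (load_capacity N K \<gamma>) =
    measure_pmf.expectation (binomial_pmf K (1 / real N)) (log_gain \<gamma>)"
proof -
  let ?M = "th_sample_pmf N K"
  have "measure_pmf.expectation ?M (load_capacity N K \<gamma>) =
      (\<Sum>i<N. measure_pmf.expectation ?M (\<lambda>\<omega>. log_gain \<gamma> (row_load K \<omega> i))) / real N"
    unfolding load_capacity_def using finite_set_pmf_th_sample[OF assms]
    by (simp add: integral_sum integrable_measure_pmf_finite)
  also have "\<dots> = (\<Sum>i<N. measure_pmf.expectation (binomial_pmf K (1 / real N)) (log_gain \<gamma>)) / real N"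
    by (intro arg_cong2[where f="(/)"] sum.cong refl)
       (simp flip: row_load_binomial)
  finally show ?thesis using assms by simp
qed

lemma variance_load_capacity_le:
  assumes "N \<ge> 1" "\<gamma> > 0"
  shows "measure_pmf.variance (th_sample_pmf N K) (load_capacity N K \<gamma>)
    \<le> real K * (2 * log 2 (1 + \<gamma>) / real N)\<^sup>2"
proof -
  have "{..<N} \<noteq> {}" using assms(1) by (simp add: lessThan_empty_iff)
  then have "finite (set_pmf (pair_pmf (pmf_of_set {..<N}) (pmf_of_set {-1, 1::real})))"
    by (simp add: set_pmf_of_set)
  then show ?thesis unfolding th_sample_pmf_def
    using Pi_pmf_variance_le_bounded_differences[where A="{..<K}" and F="load_capacity N K \<gamma>"]
      abs_load_capacity_fun_upd_le[OF assms(2)]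
    by simp
qed

lemma C_opt_concentration:
  assumes "N \<ge> 1" "\<gamma> > 0" "a > 0"
    and centre: "\<bar>measure_pmf.expectation (binomial_pmf K (1 / real N)) (log_gain \<gamma>) - c\<bar> \<le> b"
  shows "measure_pmf.prob (th_sample_pmf N K) {\<omega>. a + b < \<bar>C_opt N K \<gamma> \<omega> - c\<bar>}
    \<le> real K * (2 * log 2 (1 + \<gamma>) / real N)\<^sup>2 / a\<^sup>2"
proof -
  let ?M = "th_sample_pmf N K" and ?F = "load_capacity N K \<gamma>"
  have "measure_pmf.prob ?M {\<omega>. a + b < \<bar>C_opt N K \<gamma> \<omega> - c\<bar>} =
      measure_pmf.prob ?M ({\<omega>. a + b < \<bar>C_opt N K \<gamma> \<omega> - c\<bar>} \<inter> set_pmf ?M)"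
    by (simp add: measure_Int_set_pmf)
  also have "\<dots> \<le> measure_pmf.prob ?M {\<omega>. a \<le> \<bar>?F \<omega> - measure_pmf.expectation ?M ?F\<bar>}"
    using assms by (intro measure_pmf.finite_measure_mono)
      (auto simp: C_opt_eq_load_capacity expectation_load_capacity)
  also have "\<dots> \<le> measure_pmf.variance ?M ?F / a\<^sup>2"
    using measure_pmf.Chebyshev_inequality[where M="?M" and f="?F" and a=a] assms
      finite_set_pmf_th_sample[OF assms(1)]
    by (simp add: integrable_measure_pmf_finite)
  also have "\<dots> \<le> real K * (2 * log 2 (1 + \<gamma>) / real N)\<^sup>2 / a\<^sup>2"
    by (intro divide_right_mono variance_load_capacity_le assms) simp
  finally show ?thesis .
qed

theorem mainTheorem5:
  fixes \<beta> \<gamma> :: real and K :: "nat \<Rightarrow> nat"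
  assumes "\<beta> > 0" and "\<gamma> > 0"
    and "\<And>N. N \<ge> 1 \<Longrightarrow> K N > 0"
    and "(\<lambda>N. real (K N) / real N) \<longlonglongrightarrow> \<beta>"
  shows "\<forall>e>0. (\<lambda>N. measure_pmf.prob (th_sample_pmf N (K N))
            {\<omega>. \<bar>C_opt N (K N) \<gamma> \<omega> -
                 (\<Sum>k. \<beta> ^ k * exp (- \<beta>) / fact k * log 2 (1 + real k * \<gamma>))\<bar> > e})
          \<longlonglongrightarrow> 0"
proof (intro allI impI)
  fix e :: real assume "e > 0"
  define \<mu> where "\<mu> = (\<Sum>k. \<beta> ^ k * exp (- \<beta>) / fact k * log 2 (1 + real k * \<gamma>))"
  define bound where "bound = (\<lambda>N. real (K N) * (2 * log 2 (1 + \<gamma>) / real N)\<^sup>2 / (e / 2)\<^sup>2)"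
  have "(\<Sum>k. \<beta> ^ k / fact k * exp (- \<beta>) * log_gain \<gamma> k) = \<mu>"
    by (simp add: \<mu>_def log_gain_def mult.commute mult.left_commute)
  then have "(\<lambda>N. measure_pmf.expectation (binomial_pmf (K N) (1 / real N)) (log_gain \<gamma>)) \<longlonglongrightarrow> \<mu>"
    using expectation_binomial_tendsto_poisson[OF assms(4,1) abs_log_gain_le_power[OF assms(2)]]
    by simp
  from tendstoD[OF this half_gt_zero[OF \<open>e > 0\<close>]] have "\<forall>\<^sub>F N in sequentially. N \<ge> 1 \<and>
      \<bar>measure_pmf.expectation (binomial_pmf (K N) (1 / real N)) (log_gain \<gamma>) - \<mu>\<bar> \<le> e / 2"
    using eventually_ge_at_top[of 1] by eventually_elim (simp add: dist_real_def)
  then have upper: "\<forall>\<^sub>F N in sequentially.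
      measure_pmf.prob (th_sample_pmf N (K N)) {\<omega>. \<bar>C_opt N (K N) \<gamma> \<omega> - \<mu>\<bar> > e} \<le> bound N"
    by eventually_elim
      (use C_opt_concentration[where a="e / 2" and b="e / 2"] assms(2) \<open>e > 0\<close> in
        \<open>simp add: bound_def\<close>)
  have "(\<lambda>N. 16 * (log 2 (1 + \<gamma>))\<^sup>2 / e\<^sup>2 * (real (K N) / real N) * (1 / real N))
      \<longlonglongrightarrow> 16 * (log 2 (1 + \<gamma>))\<^sup>2 / e\<^sup>2 * \<beta> * 0"
    by (intro tendsto_intros assms(4) lim_inverse_n')
  then have "bound \<longlonglongrightarrow> 0" by (simp add: bound_def power2_eq_square field_simps)
  then show "(\<lambda>N. measure_pmf.prob (th_sample_pmf N (K N))
      {\<omega>. \<bar>C_opt N (K N) \<gamma> \<omega> - \<mu>\<bar> > e}) \<longlonglongrightarrow> 0"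
    by (intro tendsto_sandwich[OF _ upper tendsto_const]) simp_all
qed

end
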